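(* Let $w:A\to B$ be a weak equivalence in a P-category $(\mathcal{C},P,\mathcal{F},\mathcal{W})$. Then the induced map $\overline{w}:=((\delta^0_A,\delta^1_A),P(w)):P(A)\to\mathcal{P}(w,w)$ is a weak equivalence.
   Context: Let $\mathcal{C}$ have finite products and a final object $e$. A functorial path is a functor $P$ with natural transformations $\iota:1\to P$, $\delta^0,\delta^1:P\to1$, $\delta^0\iota=\delta^1\iota=1$, equipped with a symmetry $\tau$ (natural automorphism of $P$, $\tau\tau=1$, $\tau\iota=\iota$, $\delta^k\tau=\delta^{1-k}$), a coproduct $c:P\to P^2$ ($c_{P(A)}c_A=P(c_A)c_A$, $\delta^1_{P(A)}c_A=P(\delta^1_A)c_A=1$, $c_A\iota_A=\iota_{P(A)}\iota_A$, $\delta^0_{P(A)}c_A=P(\delta^0_A)c_A=\iota_A\delta^0_A$), an interchange $\mu$ (natural automorphism of $P^2$, $\delta^k_{P(A)}\mu_A=P(\delta^k_A)$, $P(\delta^k_A)\mu_A=\delta^k_{P(A)}$) and a folding map $\nabla:P^2\to P$ ($\delta^k\nabla=\delta^k\delta^k_P$, $\nabla\iota_P=1$). The double mapping path $\mathcal{P}(w,w)$ is the fibre product of $w\times w:A\times A\to B\times B$ and $(\delta^0_B,\delta^1_B):P(B)\to B\times B$. A P-category has classes $\mathcal{F}$ (fibrations), $\mathcal{W}$ (weak equivalences) satisfying: (P$_1$) both contain isomorphisms and are closed under composition, $\mathcal{W}$ is 2-out-of-3, each $A\to e$ is a fibration; (P$_2$) $\iota_A\in\mathcal{W}$, $(\delta^0_A,\delta^1_A)\in\mathcal{F}$,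 $\delta^0_A,\delta^1_A\in\mathcal{F}\cap\mathcal{W}$; (P$_3$) for $u:A\to C$ and $v:B\to C$ in $\mathcal{F}$, $A\times_CB$ exists, $\pi_1\in\mathcal{F}$, $\pi_1\in\mathcal{F}\cap\mathcal{W}$ if $v$ is, and $\pi_2\in\mathcal{W}$ if $u\in\mathcal{W}$; (P$_4$) $P$ preserves fibrations, weak equivalences and fibre products; (P$_5$) for each fibration $v:A\to B$, $((\delta^0_A,\delta^1_A),P(v)):P(A)\to\mathcal{P}(v,v)$ is a fibration. *)

theory Defs imports Main begin

record ('o,'m) cat =
  cobj  :: "'o set"
  carr  :: "'m set"
  cdom  :: "'m \<Rightarrow> 'o"
  ccod  :: "'m \<Rightarrow> 'o"
  cid   :: "'o \<Rightarrow> 'm"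
  ccomp :: "'m \<Rightarrow> 'm \<Rightarrow> 'm"   \<comment> \<open>ccomp C g f = g after f\<close>
  cterm :: "'o"
  cprod :: "'o \<Rightarrow> 'o \<Rightarrow> 'o"
  cpr1  :: "'o \<Rightarrow> 'o \<Rightarrow> 'm"
  cpr2  :: "'o \<Rightarrow> 'o \<Rightarrow> 'm"

definition hom :: "('o,'m,'x) cat_scheme \<Rightarrow> 'o \<Rightarrow> 'o \<Rightarrow> 'm set" where
  "hom C A B = {f \<in> carr C. cdom C f = A \<and> ccod C f = B}"

definition is_category :: "('o,'m,'x) cat_scheme \<Rightarrow> bool" where
  "is_category C \<longleftrightarrow>
     (\<forall>f\<in>carr C. cdom C f \<in> cobj C \<and> ccod C f \<in> cobj C) \<and>
     (\<forall>A\<in>cobj C. cid C A \<in> hom C A A) \<and>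
     (\<forall>f\<in>carr C. \<forall>g\<in>carr C. ccod C f = cdom C g \<longrightarrow>
        ccomp C g f \<in> hom C (cdom C f) (ccod C g)) \<and>
     (\<forall>f\<in>carr C. ccomp C (cid C (ccod C f)) f = f \<and> ccomp C f (cid C (cdom C f)) = f) \<and>
     (\<forall>f\<in>carr C. \<forall>g\<in>carr C. \<forall>h\<in>carr C. ccod C f = cdom C g \<longrightarrow> ccod C g = cdom C h \<longrightarrow>
        ccomp C h (ccomp C g f) = ccomp C (ccomp C h g) f)"

definition is_iso :: "('o,'m,'x) cat_scheme \<Rightarrow> 'm \<Rightarrow> bool" where
  "is_iso C f \<longleftrightarrow> f \<in> carr C \<and>
     (\<exists>g\<in>hom C (ccod C f) (cdom C f).
        ccomp C g f = cid C (cdom C f) \<and> ccomp C f g = cid C (ccod C f))"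

definition is_terminal :: "('o,'m,'x) cat_scheme \<Rightarrow> 'o \<Rightarrow> bool" where
  "is_terminal C e \<longleftrightarrow> e \<in> cobj C \<and> (\<forall>A\<in>cobj C. \<exists>!t. t \<in> hom C A e)"

definition is_product :: "('o,'m,'x) cat_scheme \<Rightarrow> 'o \<Rightarrow> 'o \<Rightarrow> 'o \<Rightarrow> 'm \<Rightarrow> 'm \<Rightarrow> bool" where
  "is_product C A B X p1 p2 \<longleftrightarrow> X \<in> cobj C \<and> p1 \<in> hom C X A \<and> p2 \<in> hom C X B \<and>
     (\<forall>Y\<in>cobj C. \<forall>f\<in>hom C Y A. \<forall>g\<in>hom C Y B.
        \<exists>!h. h \<in> hom C Y X \<and> ccomp C p1 h = f \<and> ccomp C p2 h = g)"

definition is_pullback :: "('o,'m,'x) cat_scheme \<Rightarrow> 'm \<Rightarrow> 'm \<Rightarrow> 'o \<Rightarrow> 'm \<Rightarrow> 'm \<Rightarrow> bool" where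
  "is_pullback C u v X p1 p2 \<longleftrightarrow> u \<in> carr C \<and> v \<in> carr C \<and> ccod C u = ccod C v \<and>
     X \<in> cobj C \<and> p1 \<in> hom C X (cdom C u) \<and> p2 \<in> hom C X (cdom C v) \<and>
     ccomp C u p1 = ccomp C v p2 \<and>
     (\<forall>Y\<in>cobj C. \<forall>f\<in>hom C Y (cdom C u). \<forall>g\<in>hom C Y (cdom C v).
        ccomp C u f = ccomp C v g \<longrightarrow>
        (\<exists>!h. h \<in> hom C Y X \<and> ccomp C p1 h = f \<and> ccomp C p2 h = g))"

definition is_cat_fp :: "('o,'m,'x) cat_scheme \<Rightarrow> bool" where
  "is_cat_fp C \<longleftrightarrow> is_category C \<and> is_terminal C (cterm C) \<and>
     (\<forall>A\<in>cobj C. \<forall>B\<in>cobj C. is_product C A B (cprod C A B) (cpr1 C A B) (cpr2 C A B))"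

definition tuple :: "('o,'m,'x) cat_scheme \<Rightarrow> 'm \<Rightarrow> 'm \<Rightarrow> 'm" where
  "tuple C f g = (THE h. h \<in> hom C (cdom C f) (cprod C (ccod C f) (ccod C g)) \<and>
      ccomp C (cpr1 C (ccod C f) (ccod C g)) h = f \<and>
      ccomp C (cpr2 C (ccod C f) (ccod C g)) h = g)"

definition parr :: "('o,'m,'x) cat_scheme \<Rightarrow> 'm \<Rightarrow> 'm \<Rightarrow> 'm" where
  "parr C f g = tuple C (ccomp C f (cpr1 C (cdom C f) (cdom C g)))
                        (ccomp C g (cpr2 C (cdom C f) (cdom C g)))"

record ('o,'m) path_str =
  PO    :: "'o \<Rightarrow> 'o"
  PA    :: "'m \<Rightarrow> 'm"
  iota  :: "'o \<Rightarrow> 'm"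
  dl0   :: "'o \<Rightarrow> 'm"
  dl1   :: "'o \<Rightarrow> 'm"
  tau   :: "'o \<Rightarrow> 'm"
  cop   :: "'o \<Rightarrow> 'm"
  mu    :: "'o \<Rightarrow> 'm"
  nab   :: "'o \<Rightarrow> 'm"

definition is_functor_endo :: "('o,'m,'x) cat_scheme \<Rightarrow> ('o \<Rightarrow> 'o) \<Rightarrow> ('m \<Rightarrow> 'm) \<Rightarrow> bool" where
  "is_functor_endo C FO FA \<longleftrightarrow>
     (\<forall>A\<in>cobj C. FO A \<in> cobj C) \<and>
     (\<forall>f\<in>carr C. FA f \<in> hom C (FO (cdom C f)) (FO (ccod C f))) \<and>
     (\<forall>A\<in>cobj C. FA (cid C A) = cid C (FO A)) \<and>
     (\<forall>f\<in>carr C. \<forall>g\<in>carr C. ccod C f = cdom C g \<longrightarrow>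
        FA (ccomp C g f) = ccomp C (FA g) (FA f))"

definition is_nat_trans ::
  "('o,'m,'x) cat_scheme \<Rightarrow> ('o \<Rightarrow> 'o) \<Rightarrow> ('m \<Rightarrow> 'm) \<Rightarrow> ('o \<Rightarrow> 'o) \<Rightarrow> ('m \<Rightarrow> 'm) \<Rightarrow> ('o \<Rightarrow> 'm) \<Rightarrow> bool" where
  "is_nat_trans C FO FA GO GA t \<longleftrightarrow>
     (\<forall>A\<in>cobj C. t A \<in> hom C (FO A) (GO A)) \<and>
     (\<forall>f\<in>carr C. ccomp C (GA f) (t (cdom C f)) = ccomp C (t (ccod C f)) (FA f))"

definition functorial_path :: "('o,'m,'x) cat_scheme \<Rightarrow> ('o,'m,'y) path_str_scheme \<Rightarrow> bool" where
  "functorial_path C P \<longleftrightarrow>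
     (let P0 = PO P; P1 = PA P; I0 = (\<lambda>A. A); I1 = (\<lambda>f. f);
          PP0 = (\<lambda>A. P0 (P0 A)); PP1 = (\<lambda>f. P1 (P1 f));
          cmp = ccomp C in
     is_functor_endo C P0 P1 \<and>
     is_nat_trans C I0 I1 P0 P1 (iota P) \<and>
     is_nat_trans C P0 P1 I0 I1 (dl0 P) \<and>
     is_nat_trans C P0 P1 I0 I1 (dl1 P) \<and>
     is_nat_trans C P0 P1 P0 P1 (tau P) \<and>
     is_nat_trans C P0 P1 PP0 PP1 (cop P) \<and>
     is_nat_trans C PP0 PP1 PP0 PP1 (mu P) \<and>
     is_nat_trans C PP0 PP1 P0 P1 (nab P) \<and>
     (\<forall>A\<in>cobj C.
        \<comment> \<open>path axioms\<close>
        cmp (dl0 P A) (iota P A) = cid C A \<and>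
        cmp (dl1 P A) (iota P A) = cid C A \<and>
        \<comment> \<open>symmetry\<close>
        is_iso C (tau P A) \<and>
        cmp (tau P A) (tau P A) = cid C (P0 A) \<and>
        cmp (tau P A) (iota P A) = iota P A \<and>
        cmp (dl0 P A) (tau P A) = dl1 P A \<and>
        cmp (dl1 P A) (tau P A) = dl0 P A \<and>
        \<comment> \<open>coproduct\<close>
        cmp (cop P (P0 A)) (cop P A) = cmp (P1 (cop P A)) (cop P A) \<and>
        cmp (dl1 P (P0 A)) (cop P A) = cid C (P0 A) \<and>
        cmp (P1 (dl1 P A)) (cop P A) = cid C (P0 A) \<and>
        cmp (cop P A) (iota P A) = cmp (iota P (P0 A)) (iota P A) \<and>
        cmp (dl0 P (P0 A)) (cop P A) = cmp (iota P A) (dl0 P A) \<and>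
        cmp (P1 (dl0 P A)) (cop P A) = cmp (iota P A) (dl0 P A) \<and>
        \<comment> \<open>interchange\<close>
        is_iso C (mu P A) \<and>
        cmp (dl0 P (P0 A)) (mu P A) = P1 (dl0 P A) \<and>
        cmp (dl1 P (P0 A)) (mu P A) = P1 (dl1 P A) \<and>
        cmp (P1 (dl0 P A)) (mu P A) = dl0 P (P0 A) \<and>
        cmp (P1 (dl1 P A)) (mu P A) = dl1 P (P0 A) \<and>
        \<comment> \<open>folding map\<close>
        cmp (dl0 P A) (nab P A) = cmp (dl0 P A) (dl0 P (P0 A)) \<and>
        cmp (dl1 P A) (nab P A) = cmp (dl1 P A) (dl1 P (P0 A)) \<and>
        cmp (nab P A) (iota P (P0 A)) = cid C (P0 A)))"

definition dd :: "('o,'m,'x) cat_scheme \<Rightarrow> ('o,'m,'y) path_str_scheme \<Rightarrow> 'o \<Rightarrow> 'm" where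
  "dd C P A = tuple C (dl0 P A) (dl1 P A)"

text \<open>Q with q1 : Q \<rightarrow> A \<times> A, q2 : Q \<rightarrow> P(B) is a double mapping path P(w,w),
  i.e. a fibre product of w \<times> w and (\<delta>^0_B,\<delta>^1_B).\<close>
definition is_dmp :: "('o,'m,'x) cat_scheme \<Rightarrow> ('o,'m,'y) path_str_scheme \<Rightarrow> 'm \<Rightarrow> 'o \<Rightarrow> 'm \<Rightarrow> 'm \<Rightarrow> bool" where
  "is_dmp C P w Q q1 q2 \<longleftrightarrow> is_pullback C (parr C w w) (dd C P (ccod C w)) Q q1 q2"

definition is_induced_dmp_map ::
  "('o,'m,'x) cat_scheme \<Rightarrow> ('o,'m,'y) path_str_scheme \<Rightarrow> 'm \<Rightarrow> 'o \<Rightarrow> 'm \<Rightarrow> 'm \<Rightarrow> 'm \<Rightarrow> bool" where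
  "is_induced_dmp_map C P w Q q1 q2 h \<longleftrightarrow>
     h \<in> hom C (PO P (cdom C w)) Q \<and>
     ccomp C q1 h = dd C P (cdom C w) \<and> ccomp C q2 h = PA P w"

definition P_category ::
  "('o,'m,'x) cat_scheme \<Rightarrow> ('o,'m,'y) path_str_scheme \<Rightarrow> 'm set \<Rightarrow> 'm set \<Rightarrow> bool" where
  "P_category C P Fib W \<longleftrightarrow>
     is_cat_fp C \<and> functorial_path C P \<and> Fib \<subseteq> carr C \<and> W \<subseteq> carr C \<and>
     \<comment> \<open>(P1)\<close>
     (\<forall>f. is_iso C f \<longrightarrow> f \<in> Fib \<and> f \<in> W) \<and>
     (\<forall>f\<in>Fib. \<forall>g\<in>Fib. ccod C f = cdom C g \<longrightarrow> ccomp C g f \<in> Fib) \<and>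
     (\<forall>f\<in>W. \<forall>g\<in>W. ccod C f = cdom C g \<longrightarrow> ccomp C g f \<in> W) \<and>
     (\<forall>f\<in>carr C. \<forall>g\<in>carr C. ccod C f = cdom C g \<longrightarrow>
        (f \<in> W \<and> ccomp C g f \<in> W \<longrightarrow> g \<in> W) \<and>
        (g \<in> W \<and> ccomp C g f \<in> W \<longrightarrow> f \<in> W)) \<and>
     (\<forall>A\<in>cobj C. \<forall>t\<in>hom C A (cterm C). t \<in> Fib) \<and>
     \<comment> \<open>(P2)\<close>
     (\<forall>A\<in>cobj C. iota P A \<in> W \<and> dd C P A \<in> Fib \<and>
        dl0 P A \<in> Fib \<and> dl0 P A \<in> W \<and> dl1 P A \<in> Fib \<and> dl1 P A \<in> W) \<and>
     \<comment> \<open>(P3): fibre products along fibrations v\<close>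
     (\<forall>u\<in>carr C. \<forall>v\<in>Fib. ccod C u = ccod C v \<longrightarrow>
        (\<exists>X p1 p2. is_pullback C u v X p1 p2) \<and>
        (\<forall>X p1 p2. is_pullback C u v X p1 p2 \<longrightarrow>
           p1 \<in> Fib \<and> (v \<in> W \<longrightarrow> p1 \<in> W) \<and> (u \<in> W \<longrightarrow> p2 \<in> W))) \<and>
     \<comment> \<open>(P4)\<close>
     (\<forall>f\<in>Fib. PA P f \<in> Fib) \<and> (\<forall>f\<in>W. PA P f \<in> W) \<and>
     (\<forall>u\<in>carr C. \<forall>v\<in>Fib. \<forall>X p1 p2. is_pullback C u v X p1 p2 \<longrightarrow>
        is_pullback C (PA P u) (PA P v) (PO P X) (PA P p1) (PA P p2)) \<and>
     \<comment> \<open>(P5)\<close>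
     (\<forall>v\<in>Fib. \<forall>Q q1 q2 h. is_dmp C P v Q q1 q2 \<longrightarrow>
        is_induced_dmp_map C P v Q q1 q2 h \<longrightarrow> h \<in> Fib)"

end

theory Submission imports Defs begin

(* The product map w \<times> w factors as (1 \<times> w) \<circ> (w \<times> 1), and each factor is a base change
   of w along a product projection; projections are fibrations, being base changes of maps to
   the final object, so w \<times> w is a weak equivalence by (P3). The projection
   q2 : P(w,w) \<rightarrow> P(B) is in turn the base change of w \<times> w along the fibration (\<delta>0, \<delta>1),
   hence a weak equivalence, and q2 \<circ> h = P(w) is one by (P4); 2-out-of-3 then gives h \<in> W. *)

lemma hom_dom_cod:
  assumes "f \<in> hom C X Y"
  shows "f \<in> carr C" "cdom C f = X" "ccod C f = Y"
  using assms unfolding hom_def by auto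

lemma hom_objs:
  assumes "is_category C" "f \<in> hom C X Y"
  shows "X \<in> cobj C" "Y \<in> cobj C"
  using assms unfolding is_category_def hom_def by auto

lemma carr_in_hom: "f \<in> carr C \<Longrightarrow> f \<in> hom C (cdom C f) (ccod C f)"
  unfolding hom_def by simp

lemma id_in_hom: "is_category C \<Longrightarrow> A \<in> cobj C \<Longrightarrow> cid C A \<in> hom C A A"
  unfolding is_category_def by blast

lemma comp_in_hom:
  assumes "is_category C" "f \<in> hom C X Y" "g \<in> hom C Y Z"
  shows "ccomp C g f \<in> hom C X Z"
  using assms unfolding is_category_def hom_def by auto

lemma comp_assoc:
  assumes "is_category C" "f \<in> hom C X Y" "g \<in> hom C Y Z" "k \<in> hom C Z U"
  shows "ccomp C k (ccomp C g f) = ccomp C (ccomp C k g) f"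
  using assms unfolding is_category_def hom_def by auto

lemma comp_id_left: "is_category C \<Longrightarrow> f \<in> hom C X Y \<Longrightarrow> ccomp C (cid C Y) f = f"
  and comp_id_right: "is_category C \<Longrightarrow> f \<in> hom C X Y \<Longrightarrow> ccomp C f (cid C X) = f"
  unfolding is_category_def hom_def by auto

lemma product_projs:
  assumes "is_product C A B X p1 p2"
  shows "X \<in> cobj C" "p1 \<in> hom C X A" "p2 \<in> hom C X B"
  using assms unfolding is_product_def by auto

lemma product_hom_exists:
  assumes "is_product C A B X p1 p2" "Y \<in> cobj C" "f \<in> hom C Y A" "g \<in> hom C Y B"
  obtains h where "h \<in> hom C Y X" "ccomp C p1 h = f" "ccomp C p2 h = g"
  using assms unfolding is_product_def by blast

lemma product_hom_eqI:
  assumes "is_category C" "is_product C A B X p1 p2"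
    and "h \<in> hom C Y X" "h' \<in> hom C Y X"
    and "ccomp C p1 h = ccomp C p1 h'" "ccomp C p2 h = ccomp C p2 h'"
  shows "h = h'"
proof -
  note projs = product_projs[OF assms(2)]
  have "Y \<in> cobj C" using hom_objs[OF assms(1,3)] by simp
  moreover have "ccomp C p1 h \<in> hom C Y A" "ccomp C p2 h \<in> hom C Y B"
    using comp_in_hom[OF assms(1,3)] projs by auto
  ultimately have "\<exists>!k. k \<in> hom C Y X \<and> ccomp C p1 k = ccomp C p1 h \<and> ccomp C p2 k = ccomp C p2 h"
    using assms(2) unfolding is_product_def by blast
  then show ?thesis using assms(3-6) by metis
qed

lemma product_swap:
  assumes "is_product C A B X p1 p2"
  shows "is_product C B A X p2 p1"
proof -
  have "\<exists>!h. h \<in> hom C Y X \<and> ccomp C p2 h = g \<and> ccomp C p1 h = f"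
    if "Y \<in> cobj C" "g \<in> hom C Y B" "f \<in> hom C Y A" for Y g f
  proof -
    have "\<exists>!h. h \<in> hom C Y X \<and> ccomp C p1 h = f \<and> ccomp C p2 h = g"
      using assms that unfolding is_product_def by blast
    then show ?thesis by (simp only: conj_commute conj_left_commute)
  qed
  then show ?thesis using product_projs[OF assms] unfolding is_product_def by blast
qed

lemma cat_fp_product:
  assumes "is_cat_fp C" "A \<in> cobj C" "B \<in> cobj C"
  shows "is_product C A B (cprod C A B) (cpr1 C A B) (cpr2 C A B)"
  using assms unfolding is_cat_fp_def by blast

lemma cat_fp_category: "is_cat_fp C \<Longrightarrow> is_category C"
  unfolding is_cat_fp_def by blast

lemma tuple_props:
  assumes "is_cat_fp C" "f \<in> hom C Y B1" "g \<in> hom C Y B2"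
  shows "tuple C f g \<in> hom C Y (cprod C B1 B2)"
    and "ccomp C (cpr1 C B1 B2) (tuple C f g) = f"
    and "ccomp C (cpr2 C B1 B2) (tuple C f g) = g"
proof -
  have cat: "is_category C" using cat_fp_category[OF assms(1)] .
  have objs: "Y \<in> cobj C" "B1 \<in> cobj C" "B2 \<in> cobj C"
    using hom_objs[OF cat assms(2)] hom_objs[OF cat assms(3)] by auto
  have "\<exists>!h. h \<in> hom C Y (cprod C B1 B2) \<and>
      ccomp C (cpr1 C B1 B2) h = f \<and> ccomp C (cpr2 C B1 B2) h = g"
    using cat_fp_product[OF assms(1) objs(2,3)] objs(1) assms(2,3)
    unfolding is_product_def by blast
  from theI'[OF this]
  show "tuple C f g \<in> hom C Y (cprod C B1 B2)"
    and "ccomp C (cpr1 C B1 B2) (tuple C f g) = f"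
    and "ccomp C (cpr2 C B1 B2) (tuple C f g) = g"
    unfolding tuple_def hom_dom_cod[OF assms(2)] hom_dom_cod(3)[OF assms(3)] by auto
qed

lemma parr_props:
  assumes "is_cat_fp C" "f \<in> hom C A B" "g \<in> hom C A' B'"
  shows "parr C f g \<in> hom C (cprod C A A') (cprod C B B')"
    and "ccomp C (cpr1 C B B') (parr C f g) = ccomp C f (cpr1 C A A')"
    and "ccomp C (cpr2 C B B') (parr C f g) = ccomp C g (cpr2 C A A')"
proof -
  have cat: "is_category C" using cat_fp_category[OF assms(1)] .
  have "is_product C A A' (cprod C A A') (cpr1 C A A') (cpr2 C A A')"
    using cat_fp_product[OF assms(1)] hom_objs[OF cat assms(2)] hom_objs[OF cat assms(3)] by blast
  note projs = product_projs(2,3)[OF this]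
  have parr_eq: "parr C f g = tuple C (ccomp C f (cpr1 C A A')) (ccomp C g (cpr2 C A A'))"
    unfolding parr_def hom_dom_cod[OF assms(2)] hom_dom_cod[OF assms(3)] ..
  note tuple_props[OF assms(1) comp_in_hom[OF cat projs(1) assms(2)] comp_in_hom[OF cat projs(2) assms(3)]]
  then show "parr C f g \<in> hom C (cprod C A A') (cprod C B B')"
    and "ccomp C (cpr1 C B B') (parr C f g) = ccomp C f (cpr1 C A A')"
    and "ccomp C (cpr2 C B B') (parr C f g) = ccomp C g (cpr2 C A A')"
    unfolding parr_eq by auto
qed

lemma parr_comp:
  assumes "is_cat_fp C"
    and "f1 \<in> hom C A B" "f2 \<in> hom C A' B'" "g1 \<in> hom C B D" "g2 \<in> hom C B' D'"
  shows "ccomp C (parr C g1 g2) (parr C f1 f2) = parr C (ccomp C g1 f1) (ccomp C g2 f2)"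
proof -
  have cat: "is_category C" using cat_fp_category[OF assms(1)] .
  note f = parr_props[OF assms(1-3)] and g = parr_props[OF assms(1,4,5)]
  note gf = parr_props[OF assms(1) comp_in_hom[OF cat assms(2,4)] comp_in_hom[OF cat assms(3,5)]]
  have objs: "A \<in> cobj C" "A' \<in> cobj C" "B \<in> cobj C" "B' \<in> cobj C" "D \<in> cobj C" "D' \<in> cobj C"
    using hom_objs[OF cat] assms(2-5) by blast+
  note prod_A = cat_fp_product[OF assms(1) objs(1,2)]
  note prod_B = cat_fp_product[OF assms(1) objs(3,4)]
  note prod_D = cat_fp_product[OF assms(1) objs(5,6)]
  note projs = product_projs(2,3)[OF prod_A] product_projs(2,3)[OF prod_B]
    product_projs(2,3)[OF prod_D]
  have "ccomp C (cpr1 C D D') (ccomp C (parr C g1 g2) (parr C f1 f2))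
      = ccomp C g1 (ccomp C (cpr1 C B B') (parr C f1 f2))"
    using comp_assoc[OF cat f(1) g(1) projs(5)] comp_assoc[OF cat f(1) projs(3) assms(4)] g(2)
    by simp
  also have "\<dots> = ccomp C (cpr1 C D D') (parr C (ccomp C g1 f1) (ccomp C g2 f2))"
    using comp_assoc[OF cat projs(1) assms(2,4)] f(2) gf(2) by simp
  finally have proj1: "ccomp C (cpr1 C D D') (ccomp C (parr C g1 g2) (parr C f1 f2))
      = ccomp C (cpr1 C D D') (parr C (ccomp C g1 f1) (ccomp C g2 f2))" .
  have "ccomp C (cpr2 C D D') (ccomp C (parr C g1 g2) (parr C f1 f2))
      = ccomp C g2 (ccomp C (cpr2 C B B') (parr C f1 f2))"
    using comp_assoc[OF cat f(1) g(1) projs(6)] comp_assoc[OF cat f(1) projs(4) assms(5)] g(3)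
    by simp
  also have "\<dots> = ccomp C (cpr2 C D D') (parr C (ccomp C g1 f1) (ccomp C g2 f2))"
    using comp_assoc[OF cat projs(2) assms(3,5)] f(3) gf(3) by simp
  finally have proj2: "ccomp C (cpr2 C D D') (ccomp C (parr C g1 g2) (parr C f1 f2))
      = ccomp C (cpr2 C D D') (parr C (ccomp C g1 f1) (ccomp C g2 f2))" .
  show ?thesis
    using product_hom_eqI[OF cat prod_D comp_in_hom[OF cat f(1) g(1)] gf(1) proj1 proj2] .
qed

lemma pullbackI:
  assumes "u \<in> carr C" "v \<in> carr C" "ccod C u = ccod C v"
    and "X \<in> cobj C" "p1 \<in> hom C X (cdom C u)" "p2 \<in> hom C X (cdom C v)"
    and "ccomp C u p1 = ccomp C v p2"
    and "\<And>Y f g. Y \<in> cobj C \<Longrightarrow> f \<in> hom C Y (cdom C u) \<Longrightarrow> g \<in> hom C Y (cdom C v) \<Longrightarrow>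
      ccomp C u f = ccomp C v g \<Longrightarrow> \<exists>!h. h \<in> hom C Y X \<and> ccomp C p1 h = f \<and> ccomp C p2 h = g"
  shows "is_pullback C u v X p1 p2"
  unfolding is_pullback_def using assms by blast

lemma pullback_props:
  assumes "is_pullback C u v X p1 p2"
  shows "u \<in> carr C" "v \<in> carr C" "ccod C u = ccod C v"
    and "p1 \<in> hom C X (cdom C u)" "p2 \<in> hom C X (cdom C v)"
  using assms unfolding is_pullback_def by blast+

lemma product_is_pullback_over_terminal:
  assumes "is_category C" "is_terminal C e" "is_product C X Y Z p1 p2"
    and "tX \<in> hom C X e" "tY \<in> hom C Y e"
  shows "is_pullback C tX tY Z p1 p2"
proof -
  note projs = product_projs[OF assms(3)]
  have "\<exists>!t. t \<in> hom C Z e" using assms(2) projs(1) unfolding is_terminal_def by blast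
  moreover have "ccomp C tX p1 \<in> hom C Z e" "ccomp C tY p2 \<in> hom C Z e"
    using comp_in_hom[OF assms(1)] projs assms(4,5) by blast+
  ultimately have "ccomp C tX p1 = ccomp C tY p2" by blast
  then show ?thesis
    using projs hom_dom_cod[OF assms(4)] hom_dom_cod[OF assms(5)] assms(3)
    unfolding is_product_def by (intro pullbackI) auto
qed
lemma product_map_is_pullback:
  assumes "is_category C" "w \<in> hom C A B"
    and "is_product C A Z X a z" "is_product C B Z Y b z'"
    and "m \<in> hom C X Y" "ccomp C b m = ccomp C w a" "ccomp C z' m = z"
  shows "is_pullback C w b X a m"
proof (rule pullbackI)
  note cat = assms(1)
  note projs_X = product_projs[OF assms(3)] and projs_Y = product_projs[OF assms(4)]
  fix V f g
  assume V: "V \<in> cobj C" and f: "f \<in> hom C V (cdom C w)" and g: "g \<in> hom C V (cdom C b)"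
    and commutes: "ccomp C w f = ccomp C b g"
  have f: "f \<in> hom C V A" and g: "g \<in> hom C V Y"
    using f g hom_dom_cod(2)[OF assms(2)] hom_dom_cod(2)[OF projs_Y(2)] by simp_all
  obtain h where h: "h \<in> hom C V X" "ccomp C a h = f" "ccomp C z h = ccomp C z' g"
    using product_hom_exists[OF assms(3) V f comp_in_hom[OF cat g projs_Y(3)]] .
  have mh: "ccomp C m h \<in> hom C V Y" using comp_in_hom[OF cat h(1) assms(5)] .
  have "ccomp C b (ccomp C m h) = ccomp C b g"
    using comp_assoc[OF cat h(1) assms(5) projs_Y(2)] comp_assoc[OF cat h(1) projs_X(2) assms(2)]
      assms(6) h(2) commutes by simp
  moreover have "ccomp C z' (ccomp C m h) = ccomp C z' g"
    using comp_assoc[OF cat h(1) assms(5) projs_Y(3)] assms(7) h(3) by simp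
  ultimately have mh_eq: "ccomp C m h = g" using product_hom_eqI[OF cat assms(4) mh g] by blast
  show "\<exists>!h. h \<in> hom C V X \<and> ccomp C a h = f \<and> ccomp C m h = g"
  proof (rule ex1I)
    show "h \<in> hom C V X \<and> ccomp C a h = f \<and> ccomp C m h = g" using h mh_eq by simp
  next
    fix h' assume h': "h' \<in> hom C V X \<and> ccomp C a h' = f \<and> ccomp C m h' = g"
    then have "ccomp C z h' = ccomp C z' g"
      using comp_assoc[OF cat _ assms(5) projs_Y(3), of h' V] assms(7) by simp
    then show "h' = h" using product_hom_eqI[OF cat assms(3), of h' V h] h h' by simp
  qed
qed (use assms(5,6) product_projs[OF assms(3)] hom_dom_cod[OF assms(2)]
      hom_dom_cod[OF product_projs(2)[OF assms(4)]] in simp_all)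

locale p_category =
  fixes C :: "('o, 'm, 'x) cat_scheme" and P :: "('o, 'm, 'y) path_str_scheme"
    and Fib W :: "'m set"
  assumes P_category: "P_category C P Fib W"
begin

lemma cat_fp: "is_cat_fp C"
  using P_category unfolding P_category_def by (elim conjE)

lemma category: "is_category C"
  using cat_fp_category[OF cat_fp] .

lemma weq_carr: "f \<in> W \<Longrightarrow> f \<in> carr C"
  using P_category unfolding P_category_def by (elim conjE) (erule subsetD)

lemma weq_comp:
  assumes "f \<in> W" "g \<in> W" "ccod C f = cdom C g"
  shows "ccomp C g f \<in> W"
proof -
  have "\<forall>f\<in>W. \<forall>g\<in>W. ccod C f = cdom C g \<longrightarrow> ccomp C g f \<in> W"
    using P_category unfolding P_category_def by (elim conjE) assumption
  then show ?thesis using assms by blast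
qed

lemma weq_cancel_left:
  assumes "f \<in> carr C" "g \<in> W" "ccod C f = cdom C g" "ccomp C g f \<in> W"
  shows "f \<in> W"
proof -
  have "\<forall>f\<in>carr C. \<forall>g\<in>carr C. ccod C f = cdom C g \<longrightarrow>
      (f \<in> W \<and> ccomp C g f \<in> W \<longrightarrow> g \<in> W) \<and> (g \<in> W \<and> ccomp C g f \<in> W \<longrightarrow> f \<in> W)"
    using P_category unfolding P_category_def by (elim conjE) assumption
  then show ?thesis using assms weq_carr by blast
qed

lemma terminal_map_fibration:
  assumes "A \<in> cobj C" "t \<in> hom C A (cterm C)"
  shows "t \<in> Fib"
proof -
  have "\<forall>A\<in>cobj C. \<forall>t\<in>hom C A (cterm C). t \<in> Fib"
    using P_category unfolding P_category_def by (elim conjE) assumption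
  then show ?thesis using assms by blast
qed

lemma dd_fibration: "A \<in> cobj C \<Longrightarrow> dd C P A \<in> Fib"
  using P_category unfolding P_category_def
  by (elim conjE) (drule bspec, assumption, elim conjE, assumption)

lemma path_weq: "f \<in> W \<Longrightarrow> PA P f \<in> W"
  using P_category unfolding P_category_def by (elim conjE) (drule bspec, assumption, assumption)

lemma pullback_fib_weq:
  assumes "is_pullback C u v X p1 p2" "v \<in> Fib"
  shows "p1 \<in> Fib" and "u \<in> W \<Longrightarrow> p2 \<in> W"
proof -
  have "\<forall>u\<in>carr C. \<forall>v\<in>Fib. ccod C u = ccod C v \<longrightarrow>
      (\<exists>X p1 p2. is_pullback C u v X p1 p2) \<and>
      (\<forall>X p1 p2. is_pullback C u v X p1 p2 \<longrightarrow>
         p1 \<in> Fib \<and> (v \<in> W \<longrightarrow> p1 \<in> W) \<and> (u \<in> W \<longrightarrow> p2 \<in> W))"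
    using P_category unfolding P_category_def by (elim conjE) assumption
  then show "p1 \<in> Fib" and "u \<in> W \<Longrightarrow> p2 \<in> W"
    using pullback_props(1,3)[OF assms(1)] assms by blast+
qed

lemma product_proj1_fibration:
  assumes "is_product C X Y Z p1 p2"
  shows "p1 \<in> Fib"
proof -
  have terminal: "is_terminal C (cterm C)" using cat_fp unfolding is_cat_fp_def by blast
  have "X \<in> cobj C" "Y \<in> cobj C"
    using hom_objs(2)[OF category] product_projs(2,3)[OF assms] by blast+
  then obtain tX tY where "tX \<in> hom C X (cterm C)" "tY \<in> hom C Y (cterm C)"
    using terminal unfolding is_terminal_def by blast
  with product_is_pullback_over_terminal[OF category terminal assms]
  show ?thesis using pullback_fib_weq(1) terminal_map_fibration \<open>Y \<in> cobj C\<close> by blast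
qed

lemma parr_id_weq:
  assumes "f \<in> W" "Z \<in> cobj C"
  shows "parr C f (cid C Z) \<in> W"
proof -
  have f: "f \<in> hom C (cdom C f) (ccod C f)" using carr_in_hom[OF weq_carr[OF assms(1)]] .
  note objs = hom_objs[OF category f]
  note prod_A = cat_fp_product[OF cat_fp objs(1) assms(2)]
    and prod_B = cat_fp_product[OF cat_fp objs(2) assms(2)]
  note m = parr_props[OF cat_fp f id_in_hom[OF category assms(2)]]
  have "ccomp C (cpr2 C (ccod C f) Z) (parr C f (cid C Z)) = cpr2 C (cdom C f) Z"
    using m(3) unfolding comp_id_left[OF category product_projs(3)[OF prod_A]] .
  with product_map_is_pullback[OF category f prod_A prod_B m(1,2)]
  have "is_pullback C f (cpr1 C (ccod C f) Z) (cprod C (cdom C f) Z) (cpr1 C (cdom C f) Z)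
      (parr C f (cid C Z))" .
  from pullback_fib_weq(2)[OF this product_proj1_fibration[OF prod_B] assms(1)]
  show ?thesis .
qed

lemma id_parr_weq:
  assumes "g \<in> W" "Z \<in> cobj C"
  shows "parr C (cid C Z) g \<in> W"
proof -
  have g: "g \<in> hom C (cdom C g) (ccod C g)" using carr_in_hom[OF weq_carr[OF assms(1)]] .
  note objs = hom_objs[OF category g]
  note prod_A = product_swap[OF cat_fp_product[OF cat_fp assms(2) objs(1)]]
    and prod_B = product_swap[OF cat_fp_product[OF cat_fp assms(2) objs(2)]]
  note m = parr_props[OF cat_fp id_in_hom[OF category assms(2)] g]
  have "ccomp C (cpr1 C Z (ccod C g)) (parr C (cid C Z) g) = cpr1 C Z (cdom C g)"
    using m(2) unfolding comp_id_left[OF category product_projs(3)[OF prod_A]] .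
  with product_map_is_pullback[OF category g prod_A prod_B m(1,3)]
  have "is_pullback C g (cpr2 C Z (ccod C g)) (cprod C Z (cdom C g)) (cpr2 C Z (cdom C g))
      (parr C (cid C Z) g)" .
  from pullback_fib_weq(2)[OF this product_proj1_fibration[OF prod_B] assms(1)]
  show ?thesis .
qed

lemma parr_weq:
  assumes "f \<in> W" "g \<in> W"
  shows "parr C f g \<in> W"
proof -
  obtain A B A' B' where f: "f \<in> hom C A B" and g: "g \<in> hom C A' B'"
    using carr_in_hom[OF weq_carr] assms by blast
  have id_B: "cid C B \<in> hom C B B" and id_A': "cid C A' \<in> hom C A' A'"
    using id_in_hom[OF category] hom_objs[OF category] f g by blast+
  have "parr C f g = parr C (ccomp C (cid C B) f) (ccomp C g (cid C A'))"
    using comp_id_left[OF category f] comp_id_right[OF category g] by simp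
  also have "\<dots> = ccomp C (parr C (cid C B) g) (parr C f (cid C A'))"
    using parr_comp[OF cat_fp f id_A' id_B g] by simp
  finally have factorisation: "parr C f g = ccomp C (parr C (cid C B) g) (parr C f (cid C A'))" .
  have "ccod C (parr C f (cid C A')) = cdom C (parr C (cid C B) g)"
    using hom_dom_cod(3)[OF parr_props(1)[OF cat_fp f id_A']]
      hom_dom_cod(2)[OF parr_props(1)[OF cat_fp id_B g]] by simp
  with weq_comp[OF parr_id_weq[OF assms(1)] id_parr_weq[OF assms(2)]]
  show ?thesis unfolding factorisation using hom_objs[OF category] f g by blast
qed

end

theorem lemma2p18:
  assumes "P_category C P Fib W"
    and "w \<in> W"
    and "is_dmp C P w Q q1 q2"
    and "is_induced_dmp_map C P w Q q1 q2 h"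
  shows "h \<in> W"
proof -
  interpret p_category C P Fib W by (rule p_category.intro) (rule assms(1))
  have pullback: "is_pullback C (parr C w w) (dd C P (ccod C w)) Q q1 q2"
    using assms(3) unfolding is_dmp_def .
  have "ccod C w \<in> cobj C"
    using hom_objs(2)[OF category carr_in_hom[OF weq_carr[OF assms(2)]]] .
  from pullback_fib_weq(2)[OF pullback dd_fibration[OF this] parr_weq[OF assms(2) assms(2)]]
  have "q2 \<in> W" .
  moreover have h: "h \<in> hom C (PO P (cdom C w)) Q" and "ccomp C q2 h = PA P w"
    using assms(4) unfolding is_induced_dmp_map_def by auto
  moreover have "cdom C q2 = Q"
    using hom_dom_cod(2)[OF pullback_props(5)[OF pullback]] .
  ultimately show ?thesis
    using weq_cancel_left[of h q2] path_weq[OF assms(2)] hom_dom_cod[OF h] by simp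
qed

end
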